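(* For every even integer $n \ge 2$ and every $\epsilon$ with $0<\epsilon<\tfrac{1}{2}$, consider the instance with $n+1$ bamboos and growth rates $h(1)=1$, $h(2)=\cdots=h(n+1)=\tfrac12+\epsilon$. For this instance $H^{PW}=n+1$ and $H^*\le \tfrac{n}{2}+1+(n+2)\epsilon$. Consequently, $\sup H^{PW}/H^* \ge 2$, the supremum being taken over all instances; that is, the approximation ratio $2$ of algorithm PW is asymptotically tight.
   Context: An instance consists of an integer $n\ge 1$ and growth rates $1=h(1)\ge h(2)\ge\cdots\ge h(n)>0$ of bamboos $b_1,\dots,b_n$. Bamboo Garden Trimming (discrete version): - All heights are $0$ initially. - On each day $t=1,2,\dots$ every bamboo $b_j$ grows by $h(j)$. - At the end of each day the gardener cuts exactly one bamboo $\sigma(t)\in\{1,\dots,n\}$ back to height $0$. The height of a schedule $\sigma:\mathbb{N}\to\{1,\dots,n\}$ is the supremum, over all days $t$ and all $j$, of the height of $b_j$ at the end of day $t$ just before the cut. $H^*$ denotes the infimum of this height over all schedules. Algorithm PW: - For each $j$, let $h'(j)=2^{-k}$, where $k\ge 0$ is the integer with $2^{-(k+1)}<h(j)\le 2^{-k}$. - Bamboos are grouped into $\alpha=\lceil\sum_{j=1}^n h'(j)\rceil$ partitions, with rounded growths summing to at most $1$ in each partition. - The partitions are served cyclically. - Its value is $H^{PW}=\alpha\cdot h(1)=\lceil\sum_{j=1}^n h'(j)\rceil$. *)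

theory Defs
  imports "HOL-Analysis.Analysis"
begin

definition valid_instance :: "nat \<Rightarrow> (nat \<Rightarrow> real) \<Rightarrow> bool" where
  "valid_instance n h \<longleftrightarrow> n \<ge> 1 \<and> h 1 = 1 \<and>
     (\<forall>i j. 1 \<le> i \<and> i \<le> j \<and> j \<le> n \<longrightarrow> h j \<le> h i) \<and> h n > 0"

definition schedule :: "nat \<Rightarrow> (nat \<Rightarrow> nat) \<Rightarrow> bool" where
  "schedule n \<sigma> \<longleftrightarrow> (\<forall>t\<ge>1. \<sigma> t \<in> {1..n})"

definition last_cut :: "(nat \<Rightarrow> nat) \<Rightarrow> nat \<Rightarrow> nat \<Rightarrow> nat" where
  "last_cut \<sigma> j t = Max ({s. 1 \<le> s \<and> s < t \<and> \<sigma> s = j} \<union> {0})"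

text \<open>Height of bamboo j at the end of day t, just before the cut of day t.\<close>
definition height_at :: "(nat \<Rightarrow> real) \<Rightarrow> (nat \<Rightarrow> nat) \<Rightarrow> nat \<Rightarrow> nat \<Rightarrow> real" where
  "height_at h \<sigma> j t = h j * real (t - last_cut \<sigma> j t)"

definition sched_height :: "nat \<Rightarrow> (nat \<Rightarrow> real) \<Rightarrow> (nat \<Rightarrow> nat) \<Rightarrow> ereal" where
  "sched_height n h \<sigma> = (SUP p \<in> {1..} \<times> {1..n}. ereal (height_at h \<sigma> (snd p) (fst p)))"

definition H_star :: "nat \<Rightarrow> (nat \<Rightarrow> real) \<Rightarrow> ereal" where
  "H_star n h = (INF \<sigma> \<in> {\<sigma>. schedule n \<sigma>}. sched_height n h \<sigma>)"

definition round_rate :: "real \<Rightarrow> real" where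
  "round_rate x = 2 powr (- real (THE k::nat. 2 powr (- real (k + 1)) < x \<and> x \<le> 2 powr (- real k)))"

definition H_PW :: "nat \<Rightarrow> (nat \<Rightarrow> real) \<Rightarrow> real" where
  "H_PW n h = real_of_int \<lceil>\<Sum>j=1..n. round_rate (h j)\<rceil>"

end

theory Submission
  imports Defs
begin

text \<open>
  Every rate of the instance rounds up to 1, so PW pays one full period of n + 1 days.
  A better schedule serves bamboo 1 every m = n/2 + 1 days and the n others in two blocks
  of m - 1 each, i.e. it runs through 1, 2, ..., m, 1, m + 1, ..., 2m - 1 cyclically; its
  height is at most max(m, 2m (1/2 + \<epsilon>)). Choosing \<epsilon> of order 1/n makes the ratio
  (n + 1)/H* tend to 2, while H* \<ge> 1 keeps the quotient finite.
\<close>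

lemma round_rate_eq:
  assumes "2 powr - real (k + 1) < x" "x \<le> 2 powr - real k"
  shows "round_rate x = 2 powr - real k"
proof -
  have "(THE k::nat. 2 powr (- real (k + 1)) < x \<and> x \<le> 2 powr (- real k)) = k"
  proof (rule the_equality)
    fix k' :: nat assume k': "2 powr (- real (k' + 1)) < x \<and> x \<le> 2 powr (- real k')"
    have "\<not> k' < k" and "\<not> k < k'"
    proof -
      have "2 powr - real a \<le> 2 powr - real (b + 1)" if "b < a" for a b :: nat
        using that by (intro powr_mono) auto
      then show "\<not> k' < k" "\<not> k < k'" using assms k' by (meson not_less order.trans)+
    qed
    then show "k' = k" by simp
  qed (use assms in simp)
  then show ?thesis unfolding round_rate_def by simp
qed

corollary round_rate_eq_1: "1/2 < x \<Longrightarrow> x \<le> 1 \<Longrightarrow> round_rate x = 1"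
  using round_rate_eq[of 0 x] by (simp add: powr_minus)

lemma last_cut_ge: "1 \<le> s \<Longrightarrow> s < t \<Longrightarrow> \<sigma> s = j \<Longrightarrow> s \<le> last_cut \<sigma> j t"
  unfolding last_cut_def by (rule Max_ge) (auto intro: finite_subset[of _ "{..<t}"])

lemma last_cut_1: "last_cut \<sigma> j 1 = 0"
proof -
  have "{s. 1 \<le> s \<and> s < 1 \<and> \<sigma> s = j} \<union> {0} = {0}" by auto
  then show ?thesis by (simp only: last_cut_def) simp
qed

lemma cut_gap_le_period:
  assumes "1 \<le> r" "r \<le> P" "\<And>k. \<sigma> (k * P + r) = j"
  shows "t - last_cut \<sigma> j t \<le> P"
proof (cases "t \<le> P")
  case False
  define s where "s = (t - 1 - r) div P * P + r"
  have "s + (t - 1 - r) mod P = (t - 1 - r) div P * P + (t - 1 - r) mod P + r"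
    unfolding s_def by simp
  also have "\<dots> = t - 1" using False assms(2) by simp
  finally have "s + (t - 1 - r) mod P = t - 1" .
  moreover have "(t - 1 - r) mod P < P" using assms by simp
  ultimately have "s < t" "t \<le> s + P" using False by linarith+
  moreover have "1 \<le> s" using assms(1) by (simp add: s_def)
  ultimately have "s \<le> last_cut \<sigma> j t" using last_cut_ge assms(3) by (metis s_def)
  then show ?thesis using \<open>t \<le> s + P\<close> by linarith
qed simp

lemma sched_height_le:
  assumes "\<And>t j. 1 \<le> t \<Longrightarrow> j \<in> {1..n} \<Longrightarrow> height_at h \<sigma> j t \<le> B"
  shows "sched_height n h \<sigma> \<le> ereal B"
  unfolding sched_height_def using assms by (intro SUP_least) auto

lemma H_star_ge_1:
  assumes "valid_instance n h"
  shows "1 \<le> H_star n h"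
  unfolding H_star_def
proof (rule INF_greatest)
  fix \<sigma> :: "nat \<Rightarrow> nat"
  have "ereal (height_at h \<sigma> 1 1) \<le> sched_height n h \<sigma>"
    unfolding sched_height_def using assms
    by (intro SUP_upper2[where i="(1, 1)"]) (auto simp: valid_instance_def)
  then show "1 \<le> sched_height n h \<sigma>"
    using assms by (simp add: height_at_def last_cut_1 valid_instance_def one_ereal_def
      del: One_nat_def)
qed

text \<open>
  Cyclic schedule of period 2m on the bamboos 1, ..., 2m - 1: the day residues 0 and m
  go to bamboo 1, residues 1, ..., m - 1 to bamboos 2, ..., m, and residues
  m + 1, ..., 2m - 1 to the bamboos with the same index.
\<close>
definition two_phase_schedule :: "nat \<Rightarrow> nat \<Rightarrow> nat" where
  "two_phase_schedule m t =
     (let r = t mod (2 * m) in if r mod m = 0 then 1 else if r < m then r + 1 else r)"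

lemma two_phase_schedule_range:
  assumes "0 < m"
  shows "two_phase_schedule m t \<in> {1..2 * m - 1}"
proof -
  have "t mod (2 * m) < 2 * m" using assms by simp
  then show ?thesis unfolding two_phase_schedule_def Let_def by auto
qed

lemma two_phase_schedule_first: "0 < m \<Longrightarrow> two_phase_schedule m (k * m + m) = 1"
  unfolding two_phase_schedule_def Let_def by (simp add: mod_mod_cancel)

lemma two_phase_schedule_other:
  assumes "2 \<le> j" "j \<le> 2 * m - 1"
  defines "r \<equiv> if j \<le> m then j - 1 else j"
  shows "two_phase_schedule m (k * (2 * m) + r) = j"
proof -
  have r: "1 \<le> r" "r < 2 * m" "r \<noteq> m" using assms by (auto simp: r_def)
  then have "(k * (2 * m) + r) mod (2 * m) = r" by simp
  moreover have "r mod m \<noteq> 0"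
    using r by (cases "r < m") (auto simp: le_mod_geq)
  ultimately show ?thesis
    using assms r unfolding two_phase_schedule_def Let_def by (auto simp: r_def)
qed

lemma two_phase_schedule_gap:
  assumes "j \<in> {1..2 * m - 1}"
  shows "t - last_cut (two_phase_schedule m) j t \<le> (if j = 1 then m else 2 * m)"
proof (cases "j = 1")
  case True
  then show ?thesis using assms two_phase_schedule_first
    by (intro cut_gap_le_period[of m]) auto
next
  case False
  then show ?thesis using assms two_phase_schedule_other[of j m]
    by (intro cut_gap_le_period[of "if j \<le> m then j - 1 else j"]) auto
qed

lemma two_phase_height_le:
  assumes "j \<in> {1..2 * m - 1}" "h 1 = 1" "\<And>i. i \<noteq> 1 \<Longrightarrow> 0 \<le> h i \<and> h i \<le> c"
    "real m \<le> B" "2 * real m * c \<le> B"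
  shows "height_at h (two_phase_schedule m) j t \<le> B"
proof -
  let ?g = "t - last_cut (two_phase_schedule m) j t"
  have "real ?g \<le> (if j = 1 then real m else 2 * real m)"
    using two_phase_schedule_gap[OF assms(1), of t] by (auto split: if_splits)
  moreover have "h j * real ?g \<le> c * (2 * real m)" if "j \<noteq> 1"
    using assms(3)[OF that] \<open>real ?g \<le> _\<close> that by (intro mult_mono) auto
  ultimately show ?thesis
    using assms by (cases "j = 1") (auto simp: height_at_def mult.commute)
qed

definition tight_instance :: "real \<Rightarrow> nat \<Rightarrow> real" where
  "tight_instance \<epsilon> = (\<lambda>j. if j = 1 then 1 else 1/2 + \<epsilon>)"

lemma tight_instance_valid:
  "1 \<le> n \<Longrightarrow> 0 < \<epsilon> \<Longrightarrow> \<epsilon> < 1/2 \<Longrightarrow> valid_instance n (tight_instance \<epsilon>)"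
  unfolding valid_instance_def tight_instance_def by auto

lemma H_PW_tight_instance:
  "0 < \<epsilon> \<Longrightarrow> \<epsilon> < 1/2 \<Longrightarrow> H_PW n (tight_instance \<epsilon>) = real n"
  unfolding H_PW_def tight_instance_def by (simp add: round_rate_eq_1)

lemma H_star_tight_instance_le:
  assumes "even n" "0 < \<epsilon>"
  shows "H_star (n + 1) (tight_instance \<epsilon>) \<le> ereal (real n / 2 + 1 + (real n + 2) * \<epsilon>)"
proof -
  define m where "m = n div 2 + 1"
  have m: "2 * m - 1 = n + 1" "real m = real n / 2 + 1" using assms(1) by (auto simp: m_def)
  have "schedule (n + 1) (two_phase_schedule m)"
    using two_phase_schedule_range[of m] m(1) by (simp add: schedule_def m_def)
  moreover have "sched_height (n + 1) (tight_instance \<epsilon>) (two_phase_schedule m)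
      \<le> ereal (real n / 2 + 1 + (real n + 2) * \<epsilon>)"
    using assms m by (intro sched_height_le two_phase_height_le[where c = "1/2 + \<epsilon>"])
      (auto simp: tight_instance_def algebra_simps)
  ultimately show ?thesis unfolding H_star_def by (meson INF_lower2 mem_Collect_eq)
qed

lemma PW_ratio_ge:
  assumes "even n" "2 \<le> n"
  shows "ereal (2 * (real n + 1) / (real n + 3))
    \<le> (SUP p \<in> {(m, g). valid_instance m g}. ereal (H_PW (fst p) (snd p)) / H_star (fst p) (snd p))"
    (is "_ \<le> ?S")
proof -
  define \<epsilon> :: real where "\<epsilon> = 1 / (2 * (real n + 2))"
  define g where "g = tight_instance \<epsilon>"
  have \<epsilon>: "0 < \<epsilon>" "\<epsilon> < 1/2" "real n / 2 + 1 + (real n + 2) * \<epsilon> = (real n + 3) / 2"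
    using assms by (auto simp: \<epsilon>_def field_simps)
  have valid: "valid_instance (n + 1) g"
    using \<epsilon> by (simp add: g_def tight_instance_valid)
  obtain c where c: "H_star (n + 1) g = ereal c" "1 \<le> c" "c \<le> (real n + 3) / 2"
    using H_star_ge_1[OF valid] H_star_tight_instance_le[OF assms(1) \<epsilon>(1)] \<epsilon>(3)
    by (cases "H_star (n + 1) g") (auto simp: g_def)
  have "2 * (real n + 1) / (real n + 3) = (real n + 1) / ((real n + 3) / 2)" by simp
  also have "\<dots> \<le> (real n + 1) / c" using c by (intro divide_left_mono) auto
  finally have "ereal (2 * (real n + 1) / (real n + 3)) \<le> ereal (H_PW (n + 1) g) / H_star (n + 1) g"
    using c \<epsilon> by (simp add: g_def H_PW_tight_instance add.commute)
  also have "\<dots> \<le> ?S" using valid by (intro SUP_upper2[where i = "(n + 1, g)"]) auto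
  finally show ?thesis .
qed

lemma PW_ratio_sup_ge_2:
  "2 \<le> (SUP p \<in> {(m, g). valid_instance m g}. ereal (H_PW (fst p) (snd p)) / H_star (fst p) (snd p))"
  (is "_ \<le> ?S")
proof (rule dense_le)
  fix y :: ereal assume "y < 2"
  then show "y \<le> ?S"
  proof (cases y)
    case (real r)
    obtain q :: nat where q: "4 / (2 - r) < real q" using reals_Archimedean2 by blast
    define n where "n = 2 * q + 2"
    have "4 < (2 - r) * (real n + 3)"
      using q \<open>y < 2\<close> real by (simp add: n_def field_simps)
    then have "y \<le> ereal (2 * (real n + 1) / (real n + 3))"
      using real by (simp add: field_simps)
    also have "\<dots> \<le> ?S" by (rule PW_ratio_ge) (auto simp: n_def)
    finally show ?thesis .
  qed auto
qed

theorem lemma1: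
  fixes n :: nat and \<epsilon> :: real
  assumes "even n" and "n \<ge> 2" and "0 < \<epsilon>" and "\<epsilon> < 1/2"
  defines "h \<equiv> (\<lambda>j::nat. if j = 1 then 1 else 1/2 + \<epsilon>)"
  shows "H_PW (n + 1) h = real (n + 1) \<and>
    H_star (n + 1) h \<le> ereal (real n / 2 + 1 + (real n + 2) * \<epsilon>) \<and>
    (SUP p \<in> {(m, g). valid_instance m g}. ereal (H_PW (fst p) (snd p)) / H_star (fst p) (snd p)) \<ge> 2"
proof -
  have "h = tight_instance \<epsilon>" by (simp add: h_def tight_instance_def)
  then show ?thesis
    using H_PW_tight_instance H_star_tight_instance_le PW_ratio_sup_ge_2 assms by simp
qed

end
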